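(* For every $\mathcal{V}$-valued relation $d\colon X\times X\to\mathcal{V}$, $\alpha_X(\gamma_X(d))$ is the least $\mathcal{V}$-category on $X$ above $d$ (in the pointwise order $\sqsubseteq$), i.e. its metric closure.
   Context: $\mathcal{V}$ is a quantale: a complete lattice $(\mathcal{V},\sqsubseteq)$ with a commutative monoid structure $(\mathcal{V},\otimes,k)$ such that $\otimes$ preserves arbitrary joins in each argument; $d_\mathcal{V}(a,-)$ denotes the right adjoint of $a\otimes -$ (residuation). A $\mathcal{V}$-category on $X$ is $d\colon X\times X\to\mathcal{V}$ with $k\sqsubseteq d(x,x)$ and $d(x,y)\otimes d(y,z)\sqsubseteq d(x,z)$. Write $\bigwedge$ for meets in the order $\sqsubseteq$. For $S\subseteq\mathcal{V}^X$, $\alpha_X(S)(x_1,x_2)=\bigwedge_{p\in S} d_\mathcal{V}(p(x_1),p(x_2))$; $\gamma_X(d)=\{p\colon X\to\mathcal{V}\mid d(x_1,x_2)\sqsubseteq d_\mathcal{V}(p(x_1),p(x_2))\text{ for all }x_1,x_2\}$. *)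

theory Defs
  imports Main
begin

definition quantale :: "('v::complete_lattice \<Rightarrow> 'v \<Rightarrow> 'v) \<Rightarrow> 'v \<Rightarrow> bool" where
  "quantale tn k \<longleftrightarrow>
     (\<forall>a b c. tn (tn a b) c = tn a (tn b c)) \<and>
     (\<forall>a b. tn a b = tn b a) \<and>
     (\<forall>a. tn k a = a) \<and>
     (\<forall>a S. tn a (Sup S) = Sup ((\<lambda>b. tn a b) ` S)) \<and>
     (\<forall>a S. tn (Sup S) a = Sup ((\<lambda>b. tn b a) ` S))"

definition resid :: "('v::complete_lattice \<Rightarrow> 'v \<Rightarrow> 'v) \<Rightarrow> 'v \<Rightarrow> 'v \<Rightarrow> 'v" where
  "resid tn a b = Sup {c. tn a c \<le> b}"

definition vcat :: "('v::complete_lattice \<Rightarrow> 'v \<Rightarrow> 'v) \<Rightarrow> 'v \<Rightarrow> ('x \<Rightarrow> 'x \<Rightarrow> 'v) \<Rightarrow> bool" where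
  "vcat tn k d \<longleftrightarrow> (\<forall>x. k \<le> d x x) \<and> (\<forall>x y z. tn (d x y) (d y z) \<le> d x z)"

definition alphaX :: "('v::complete_lattice \<Rightarrow> 'v \<Rightarrow> 'v) \<Rightarrow> ('x \<Rightarrow> 'v) set \<Rightarrow> 'x \<Rightarrow> 'x \<Rightarrow> 'v" where
  "alphaX tn S x1 x2 = (INF p\<in>S. resid tn (p x1) (p x2))"

definition gammaX :: "('v::complete_lattice \<Rightarrow> 'v \<Rightarrow> 'v) \<Rightarrow> ('x \<Rightarrow> 'x \<Rightarrow> 'v) \<Rightarrow> ('x \<Rightarrow> 'v) set" where
  "gammaX tn d = {p. \<forall>x1 x2. d x1 x2 \<le> resid tn (p x1) (p x2)}"

end

theory Submission
  imports Defs
begin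

text \<open>Every \<open>\<alpha>\<^sub>X(S)\<close> is a \<open>\<V>\<close>-category, being a meet of pullbacks of the
internal hom of \<open>\<V>\<close> along the maps \<open>p \<in> S\<close>. Leastness is a Yoneda argument: if
\<open>e\<close> is a \<open>\<V>\<close>-category above \<open>d\<close>, each row \<open>e x\<close> is a \<open>\<V>\<close>-functor out of \<open>d\<close>,
i.e. lies in \<open>\<gamma>\<^sub>X(d)\<close>, so \<open>\<alpha>\<^sub>X(\<gamma>\<^sub>X(d)) x y \<sqsubseteq> d\<^sub>\<V>(e x x, e x y) \<sqsubseteq> d\<^sub>\<V>(k, e x y) = e x y\<close>.\<close>

lemma tensor_mono_right:
  assumes "quantale tn k" and "b \<le> c"
  shows "tn a b \<le> tn a c"
proof -
  have "tn a (Sup {b, c}) = Sup (tn a ` {b, c})"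
    using assms(1) unfolding quantale_def by blast
  with assms(2) have "tn a c = sup (tn a b) (tn a c)"
    by (simp add: sup_absorb2)
  then show ?thesis
    by (metis sup.cobounded1)
qed

lemma tensor_mono_left:
  assumes "quantale tn k" and "a \<le> b"
  shows "tn a c \<le> tn b c"
  using tensor_mono_right[OF assms] assms(1) unfolding quantale_def by metis

lemma resid_adjunction:
  assumes "quantale tn k"
  shows "c \<le> resid tn a b \<longleftrightarrow> tn a c \<le> b"
proof
  have "tn a (resid tn a b) = Sup (tn a ` {c. tn a c \<le> b})"
    using assms unfolding quantale_def resid_def by blast
  also have "\<dots> \<le> b"
    by (auto intro: Sup_least)
  finally have counit: "tn a (resid tn a b) \<le> b" .
  assume "c \<le> resid tn a b"
  then have "tn a c \<le> tn a (resid tn a b)"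
    by (rule tensor_mono_right[OF assms])
  then show "tn a c \<le> b"
    using counit by (rule order_trans)
next
  assume "tn a c \<le> b"
  then show "c \<le> resid tn a b"
    unfolding resid_def by (auto intro: Sup_upper)
qed

lemma alphaX_le_resid:
  assumes "p \<in> S"
  shows "alphaX tn S x y \<le> resid tn (p x) (p y)"
  unfolding alphaX_def using assms by (rule INF_lower)

lemma vcat_alphaX:
  fixes S :: "('x \<Rightarrow> 'v::complete_lattice) set"
  assumes q: "quantale tn k"
  shows "vcat tn k (alphaX tn S)"
  unfolding vcat_def
proof (intro conjI allI)
  fix x :: 'x
  have "k \<le> resid tn (p x) (p x)" for p
    using q unfolding resid_adjunction[OF q] quantale_def by simp
  then show "k \<le> alphaX tn S x x"
    unfolding alphaX_def by (blast intro: INF_greatest)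
next
  fix x y z :: 'x
  let ?a = "alphaX tn S"
  have "tn (?a x y) (?a y z) \<le> resid tn (p x) (p z)" if p: "p \<in> S" for p
  proof -
    have xy: "tn (p x) (?a x y) \<le> p y" and yz: "tn (p y) (?a y z) \<le> p z"
      by (rule alphaX_le_resid[OF p, THEN resid_adjunction[OF q, THEN iffD1]])+
    have "tn (p x) (tn (?a x y) (?a y z)) = tn (tn (p x) (?a x y)) (?a y z)"
      using q unfolding quantale_def by metis
    also have "\<dots> \<le> tn (p y) (?a y z)"
      using tensor_mono_left[OF q xy] .
    also have "\<dots> \<le> p z"
      by (rule yz)
    finally show ?thesis
      by (rule resid_adjunction[OF q, THEN iffD2])
  qed
  then show "tn (?a x y) (?a y z) \<le> ?a x z"
    unfolding alphaX_def by (rule INF_greatest)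
qed

lemma le_alphaX_gammaX: "d x y \<le> alphaX tn (gammaX tn d) x y"
  unfolding alphaX_def gammaX_def by (blast intro: INF_greatest)

lemma vcat_row_in_gammaX:
  assumes q: "quantale tn k" and e: "vcat tn k e" and le: "\<forall>x y. d x y \<le> e x y"
  shows "e x \<in> gammaX tn d"
  unfolding gammaX_def
proof (intro CollectI allI)
  fix y z
  have "tn (e x y) (d y z) \<le> tn (e x y) (e y z)"
    using le tensor_mono_right[OF q] by blast
  also have "\<dots> \<le> e x z"
    using e unfolding vcat_def by blast
  finally show "d y z \<le> resid tn (e x y) (e x z)"
    by (rule resid_adjunction[OF q, THEN iffD2])
qed

lemma alphaX_le_vcat:
  assumes q: "quantale tn k" and e: "vcat tn k e" and rows: "\<And>x. e x \<in> S"
  shows "alphaX tn S x y \<le> e x y"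
proof -
  have "alphaX tn S x y = tn k (alphaX tn S x y)"
    using q unfolding quantale_def by simp
  also have "\<dots> \<le> tn (e x x) (alphaX tn S x y)"
    using e tensor_mono_left[OF q] unfolding vcat_def by blast
  also have "\<dots> \<le> e x y"
    using alphaX_le_resid[OF rows] by (rule resid_adjunction[OF q, THEN iffD1])
  finally show ?thesis .
qed

theorem mainTheorem8:
  fixes tn :: "'v::complete_lattice \<Rightarrow> 'v \<Rightarrow> 'v" and k :: 'v
    and d :: "'x \<Rightarrow> 'x \<Rightarrow> 'v"
  assumes "quantale tn k"
  shows "vcat tn k (alphaX tn (gammaX tn d))
       \<and> (\<forall>x y. d x y \<le> alphaX tn (gammaX tn d) x y)
       \<and> (\<forall>e. vcat tn k e \<and> (\<forall>x y. d x y \<le> e x y)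
              \<longrightarrow> (\<forall>x y. alphaX tn (gammaX tn d) x y \<le> e x y))"
proof (intro conjI allI impI)
  show "vcat tn k (alphaX tn (gammaX tn d))"
    by (rule vcat_alphaX[OF assms])
next
  fix x y
  show "d x y \<le> alphaX tn (gammaX tn d) x y"
    by (rule le_alphaX_gammaX)
next
  fix e x y
  assume "vcat tn k e \<and> (\<forall>x y. d x y \<le> e x y)"
  then have e: "vcat tn k e" and le: "\<forall>x y. d x y \<le> e x y"
    by blast+
  show "alphaX tn (gammaX tn d) x y \<le> e x y"
    by (rule alphaX_le_vcat[OF assms e vcat_row_in_gammaX[OF assms e le]])
qed

end
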